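(* Let $x_0\in\mathbb{R}^2$, $r_0>0$, and let $K$ be a relatively closed subset of $B(x_0,r_0)$ containing $x_0$. If $K$ separates $B(x_0,r_0)$, then $\beta^{\rm bil}_K(x_0,r_0)\le4\beta_K(x_0,r_0)$.
   Context: $B(x,r)$ is the open ball. Flatness: $\beta_K(x_0,r_0)=r_0^{-1}\inf_\ell\sup_{y\in K\cap B(x_0,r_0)}\mathrm{dist}(y,\ell)$, infimum over lines $\ell$ through $x_0$ (attained); $\nu(x_0,r_0)$ is a unit normal of a chosen minimizing line, and $D^\pm_t(x_0,r_0)=\{x\in B(x_0,r_0):\pm(x-x_0)\cdot\nu(x_0,r_0)>t\}$. Bilateral flatness: $\beta^{\rm bil}_K(x_0,r_0)=r_0^{-1}\inf_\ell\max\{\sup_{y\in K\cap B(x_0,r_0)}\mathrm{dist}(y,\ell),\sup_{y\in\ell\cap B(x_0,r_0)}\mathrm{dist}(y,K)\}$, infimum over lines through $x_0$. $K$ separates $B(x_0,r_0)$ if $\beta:=\beta_K(x_0,r_0)\le1/2$ and $D^+_{\beta r_0}(x_0,r_0)$, $D^-_{\beta r_0}(x_0,r_0)$ lie in distinct connected components of $B(x_0,r_0)\setminus K$. *)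

theory Defs
  imports "HOL-Analysis.Analysis"
begin

type_synonym R2 = "real ^ 2"

definition line_thru :: "R2 \<Rightarrow> R2 \<Rightarrow> R2 set" where
  "line_thru x0 nu = {x. (x - x0) \<bullet> nu = 0}"

definition dev :: "R2 set \<Rightarrow> R2 \<Rightarrow> real \<Rightarrow> R2 \<Rightarrow> real" where
  "dev K x0 r0 nu = (SUP y\<in>K \<inter> ball x0 r0. infdist y (line_thru x0 nu))"

definition beta :: "R2 set \<Rightarrow> R2 \<Rightarrow> real \<Rightarrow> real" where
  "beta K x0 r0 = (INF nu\<in>sphere 0 1. dev K x0 r0 nu) / r0"

definition beta_bil :: "R2 set \<Rightarrow> R2 \<Rightarrow> real \<Rightarrow> real" where
  "beta_bil K x0 r0 = (INF nu\<in>sphere 0 1.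
      max (dev K x0 r0 nu) (SUP y\<in>line_thru x0 nu \<inter> ball x0 r0. infdist y K)) / r0"

definition minimizing_normal :: "R2 set \<Rightarrow> R2 \<Rightarrow> real \<Rightarrow> R2 \<Rightarrow> bool" where
  "minimizing_normal K x0 r0 nu \<longleftrightarrow> norm nu = 1 \<and> dev K x0 r0 nu = r0 * beta K x0 r0"

definition Dplus :: "R2 \<Rightarrow> real \<Rightarrow> R2 \<Rightarrow> real \<Rightarrow> R2 set" where
  "Dplus x0 r0 nu t = {x \<in> ball x0 r0. (x - x0) \<bullet> nu > t}"

definition Dminus :: "R2 \<Rightarrow> real \<Rightarrow> R2 \<Rightarrow> real \<Rightarrow> R2 set" where
  "Dminus x0 r0 nu t = {x \<in> ball x0 r0. - ((x - x0) \<bullet> nu) > t}"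

text \<open>K separates B(x0,r0), w.r.t. a chosen minimizing line (the theorem is then
  required for every such choice).\<close>
definition separates :: "R2 set \<Rightarrow> R2 \<Rightarrow> real \<Rightarrow> R2 \<Rightarrow> bool" where
  "separates K x0 r0 nu \<longleftrightarrow> beta K x0 r0 \<le> 1/2 \<and>
     (\<exists>C1\<in>components (ball x0 r0 - K). \<exists>C2\<in>components (ball x0 r0 - K).
        C1 \<noteq> C2 \<and> Dplus x0 r0 nu (beta K x0 r0 * r0) \<subseteq> C1
        \<and> Dminus x0 r0 nu (beta K x0 r0 * r0) \<subseteq> C2)"

end

theory Submission
  imports Defs
begin

text \<open>Let \<open>b = r0 \<beta>\<close> and suppose a point \<open>y\<close> of the minimizing line lies at distance
  \<open>d > 2b\<close> from \<open>K\<close>. Moving from \<open>y\<close> by \<open>d/2\<close> towards \<open>x0\<close> and by \<open>\<pm>d/2\<close> in the normal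
  direction gives two points of the convex set \<open>B(y,d) \<inter> B(x0,r0)\<close>, one in \<open>D\<^sup>+\<^sub>b\<close> and one in
  \<open>D\<^sup>-\<^sub>b\<close>. This set misses \<open>K\<close>, so the two half-discs would lie in the same component of
  \<open>B(x0,r0) \<setminus> K\<close>. Hence every point of the line is within \<open>2b\<close> of \<open>K\<close>.\<close>

lemma offset_point_in_balls:
  fixes x0 y nu :: "'a::real_inner"
  assumes nu: "norm nu = 1" and orth: "(y - x0) \<bullet> nu = 0"
    and d: "0 < d" "d \<le> norm (y - x0)" "norm (y - x0) < r0" and s: "\<bar>s\<bar> \<le> d / 2"
  obtains z where "dist y z < d" "dist x0 z < r0" "(z - x0) \<bullet> nu = s"
proof -
  define a where "a = norm (y - x0)"
  define u where "u = (1 / a) *\<^sub>R (y - x0)"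
  have "a > 0" using d unfolding a_def by linarith
  have y: "y - x0 = a *\<^sub>R u" using \<open>a > 0\<close> by (simp add: u_def)
  have u: "norm u = 1" "u \<bullet> nu = 0" using \<open>a > 0\<close> orth by (simp_all add: u_def a_def)
  have pythagoras: "(norm (p *\<^sub>R u + q *\<^sub>R nu))\<^sup>2 = p\<^sup>2 + q\<^sup>2" for p q
    using norm_add_Pythagorean[of "p *\<^sub>R u" "q *\<^sub>R nu"] u nu
    by (simp add: orthogonal_def power_mult_distrib)
  have s2: "s\<^sup>2 \<le> d\<^sup>2 / 4"
    using power_mono[OF s abs_ge_zero, of 2] by (simp add: power_divide)
  define z where "z = y - (d / 2) *\<^sub>R u + s *\<^sub>R nu"
  have "(norm (y - z))\<^sup>2 = d\<^sup>2 / 4 + s\<^sup>2"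
    using pythagoras[of "d / 2" "- s"] by (simp add: z_def power_divide)
  also have "\<dots> < d\<^sup>2"
    using s2 zero_less_power[OF \<open>0 < d\<close>, of 2] by linarith
  finally have near: "dist y z < d"
    using d by (simp add: dist_norm power2_less_imp_less)
  have "(norm (z - x0))\<^sup>2 = (a - d / 2)\<^sup>2 + s\<^sup>2"
    using pythagoras[of "a - d / 2" s] y by (simp add: z_def algebra_simps)
  also have "\<dots> \<le> (r0 - d / 2)\<^sup>2 + d\<^sup>2 / 4"
    using s2 d by (intro add_mono power_mono) (auto simp: a_def)
  also have "\<dots> < r0\<^sup>2"
    using d by (simp add: power2_eq_square field_simps)
  finally have inside: "dist x0 z < r0"
    using d by (simp add: dist_norm norm_minus_commute power2_less_imp_less)
  have "(z - x0) \<bullet> nu = s"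
    using y u nu by (simp add: z_def algebra_simps inner_diff_left inner_add_left norm_eq_1)
  with near inside show thesis by (rule that)
qed

lemma ball_infdist_disjoint: "ball y (infdist y K) \<inter> K = {}"
  using infdist_le[of _ K y] by (fastforce simp: not_less)

lemma dev_nonneg:
  assumes "x0 \<in> K" "r0 > 0"
  shows "0 \<le> dev K x0 r0 nu"
proof -
  have x0_line: "x0 \<in> line_thru x0 nu" by (simp add: line_thru_def)
  have "bdd_above ((\<lambda>y. infdist y (line_thru x0 nu)) ` (K \<inter> ball x0 r0))"
  proof (rule bdd_aboveI2)
    fix y assume "y \<in> K \<inter> ball x0 r0"
    then show "infdist y (line_thru x0 nu) \<le> r0"
      using infdist_le[OF x0_line, of y] by (simp add: dist_commute)
  qed
  moreover have "x0 \<in> K \<inter> ball x0 r0" using assms by simp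
  ultimately have "infdist x0 (line_thru x0 nu) \<le> dev K x0 r0 nu"
    unfolding dev_def by (rule cSUP_upper2) simp
  then show ?thesis using infdist_nonneg order_trans by blast
qed

lemma infdist_line_le_of_separating_components:
  assumes "x0 \<in> K" "norm nu = 1" "0 \<le> t"
    and C: "C1 \<in> components (ball x0 r0 - K)" "C2 \<in> components (ball x0 r0 - K)" "C1 \<noteq> C2"
      "Dplus x0 r0 nu t \<subseteq> C1" "Dminus x0 r0 nu t \<subseteq> C2"
    and y: "y \<in> line_thru x0 nu \<inter> ball x0 r0"
  shows "infdist y K \<le> 2 * t"
proof (rule ccontr)
  define d where "d = infdist y K"
  assume "\<not> infdist y K \<le> 2 * t"
  then have "2 * t < d" "0 < d" using \<open>0 \<le> t\<close> by (auto simp: d_def)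
  have "d \<le> norm (y - x0)"
    using infdist_le[OF \<open>x0 \<in> K\<close>, of y] by (simp add: d_def dist_norm)
  have "(y - x0) \<bullet> nu = 0" "norm (y - x0) < r0"
    using y by (simp_all add: line_thru_def dist_norm norm_minus_commute)
  note offset = offset_point_in_balls[OF \<open>norm nu = 1\<close> this(1) \<open>0 < d\<close> \<open>d \<le> norm (y - x0)\<close> this(2)]
  obtain zp where zp: "dist y zp < d" "dist x0 zp < r0" "(zp - x0) \<bullet> nu = d / 2"
    by (rule offset[of "d / 2"]) (use \<open>0 < d\<close> in auto)
  obtain zm where zm: "dist y zm < d" "dist x0 zm < r0" "(zm - x0) \<bullet> nu = - (d / 2)"
    by (rule offset[of "- (d / 2)"]) (use \<open>0 < d\<close> in auto)
  have "zp \<in> C1" using zp \<open>2 * t < d\<close> C(4) by (auto simp: Dplus_def)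
  have "zm \<in> C2" using zm \<open>2 * t < d\<close> C(5) by (auto simp: Dminus_def)
  define S where "S = ball y d \<inter> ball x0 r0"
  have "S \<subseteq> ball x0 r0 - K"
    using ball_infdist_disjoint[of y K] by (auto simp: S_def d_def)
  moreover have "closed_segment zp zm \<subseteq> S"
    using zp zm by (intro closed_segment_subset) (auto simp: S_def intro: convex_Int)
  ultimately have "closed_segment zp zm \<subseteq> C1"
    using \<open>zp \<in> C1\<close> by (intro components_maximal[OF C(1)]) auto
  then have "zm \<in> C1 \<inter> C2" using \<open>zm \<in> C2\<close> by auto
  then show False using components_nonoverlap[OF C(1,2)] C(3) by auto
qed

lemma beta_bil_le_of_normal:
  assumes "x0 \<in> K" "r0 > 0" "norm nu = 1" "dev K x0 r0 nu \<le> c"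
    and line: "\<And>y. y \<in> line_thru x0 nu \<inter> ball x0 r0 \<Longrightarrow> infdist y K \<le> c"
  shows "beta_bil K x0 r0 \<le> c / r0"
proof -
  define f where "f nu = max (dev K x0 r0 nu) (SUP y\<in>line_thru x0 nu \<inter> ball x0 r0. infdist y K)"
    for nu
  have "x0 \<in> line_thru x0 nu \<inter> ball x0 r0" using \<open>r0 > 0\<close> by (simp add: line_thru_def)
  then have "(SUP y\<in>line_thru x0 nu \<inter> ball x0 r0. infdist y K) \<le> c"
    using line by (intro cSUP_least) auto
  then have f_nu: "f nu \<le> c" using \<open>dev K x0 r0 nu \<le> c\<close> by (simp add: f_def)
  have "bdd_below (f ` sphere 0 1)"
    using dev_nonneg[OF assms(1,2)] by (intro bdd_belowI2[of _ 0]) (simp add: f_def le_max_iff_disj)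
  then have "(INF nu\<in>sphere 0 1. f nu) \<le> c"
    using \<open>norm nu = 1\<close> by (intro cINF_lower2[where f = f and x = nu, OF _ _ f_nu]) auto
  then show ?thesis
    unfolding beta_bil_def f_def[symmetric] using \<open>r0 > 0\<close> by (intro divide_right_mono) auto
qed

theorem lemma4p2:
  fixes x0 :: R2 and r0 :: real and K :: "R2 set" and nu :: R2
  assumes "r0 > 0"
    and "K \<subseteq> ball x0 r0" and "closedin (top_of_set (ball x0 r0)) K"
    and "x0 \<in> K"
    and "minimizing_normal K x0 r0 nu"
    and "separates K x0 r0 nu"
  shows "beta_bil K x0 r0 \<le> 4 * beta K x0 r0"
proof -
  define b where "b = beta K x0 r0 * r0"
  have "norm nu = 1" and dev: "dev K x0 r0 nu = b"
    using assms(5) by (auto simp: minimizing_normal_def b_def)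
  have "0 \<le> b" using dev_nonneg[OF assms(4,1), of nu] dev by simp
  obtain C1 C2 where C: "C1 \<in> components (ball x0 r0 - K)" "C2 \<in> components (ball x0 r0 - K)"
    "C1 \<noteq> C2" "Dplus x0 r0 nu b \<subseteq> C1" "Dminus x0 r0 nu b \<subseteq> C2"
    using assms(6) unfolding separates_def b_def by blast
  have "infdist y K \<le> 4 * b" if "y \<in> line_thru x0 nu \<inter> ball x0 r0" for y
    using infdist_line_le_of_separating_components[OF assms(4) \<open>norm nu = 1\<close> \<open>0 \<le> b\<close> C that] \<open>0 \<le> b\<close>
    by linarith
  then have "beta_bil K x0 r0 \<le> 4 * b / r0"
    using dev \<open>0 \<le> b\<close> by (intro beta_bil_le_of_normal[OF assms(4,1) \<open>norm nu = 1\<close>]) auto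
  then show ?thesis using \<open>r0 > 0\<close> by (simp add: b_def)
qed

end
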